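(* Consider the golf process on $\mathbb{Z}$ with parameters $\rho_b<\rho_h$ and $p\in[0,1]$. Then almost surely every separator of the initial configuration belongs to the set $H^1$ of holes free at time $1$; in particular, almost surely $H^1$ contains infinitely many holes to the left and infinitely many to the right of $0$.
   Context: Golf process on $\mathbb{Z}$: initial states $(\eta^0_x)$ i.i.d., equal to $1$ (ball) with probability $\rho_b$, $-1$ (hole) with probability $\rho_h$, $0$ (neutral) otherwise ($\rho_b+\rho_h\le1$); clocks i.i.d. uniform on $[0,1]$; at its clock time each ball performs an independent random walk (step $+1$ w.p. $p$, $-1$ w.p. $1-p$) from its vertex, stopped at the first currently free hole, which it fills. A vertex $v$ is a separator if $\eta^0_v=-1$, $\sum_{j=k}^{v-1}\eta^0_j\le0$ for all $k<v$, and $\sum_{j=v+1}^{k}\eta^0_j\le0$ for all $k>v$. *)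

theory Defs
  imports "HOL-Probability.Probability"
begin

text \<open>A sample point assigns to each vertex x of Z a triple
  (initial state, clock time, step sequence of its random walk).
  State 1 = ball, -1 = hole, 0 = neutral. Step True = +1, False = -1.\<close>

type_synonym golf_omega = "int \<Rightarrow> int \<times> real \<times> (nat \<Rightarrow> bool)"

definition state_law :: "real \<Rightarrow> real \<Rightarrow> int measure" where
  "state_law \<rho>b \<rho>h = measure_pmf (embed_pmf (\<lambda>s::int.
      if s = 1 then \<rho>b else if s = -1 then \<rho>h else if s = 0 then 1 - \<rho>b - \<rho>h else 0))"

definition clock_law :: "real measure" where
  "clock_law = uniform_measure lborel {0..1}"

definition walk_law :: "real \<Rightarrow> (nat \<Rightarrow> bool) measure" where
  "walk_law p = PiM UNIV (\<lambda>_::nat. measure_pmf (bernoulli_pmf p))"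

definition site_law :: "real \<Rightarrow> real \<Rightarrow> real \<Rightarrow> (int \<times> real \<times> (nat \<Rightarrow> bool)) measure" where
  "site_law \<rho>b \<rho>h p = state_law \<rho>b \<rho>h \<Otimes>\<^sub>M (clock_law \<Otimes>\<^sub>M walk_law p)"

definition golf_space :: "real \<Rightarrow> real \<Rightarrow> real \<Rightarrow> golf_omega measure" where
  "golf_space \<rho>b \<rho>h p = PiM UNIV (\<lambda>_::int. site_law \<rho>b \<rho>h p)"

definition eta :: "golf_omega \<Rightarrow> int \<Rightarrow> int" where
  "eta \<omega> x = fst (\<omega> x)"

definition clk :: "golf_omega \<Rightarrow> int \<Rightarrow> real" where
  "clk \<omega> x = fst (snd (\<omega> x))"

definition steps :: "golf_omega \<Rightarrow> int \<Rightarrow> nat \<Rightarrow> bool" where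
  "steps \<omega> x = snd (snd (\<omega> x))"

definition walk_pos :: "golf_omega \<Rightarrow> int \<Rightarrow> nat \<Rightarrow> int" where
  "walk_pos \<omega> x k = x + (\<Sum>i<k. if steps \<omega> x i then 1 else -1)"

definition free_hole :: "golf_omega \<Rightarrow> int set \<Rightarrow> int \<Rightarrow> bool" where
  "free_hole \<omega> F y \<longleftrightarrow> eta \<omega> y = -1 \<and> y \<notin> F"

definition move_ball :: "golf_omega \<Rightarrow> int \<Rightarrow> int set \<Rightarrow> int set" where
  "move_ball \<omega> x F =
     (if \<exists>k. free_hole \<omega> F (walk_pos \<omega> x k)
      then insert (walk_pos \<omega> x (LEAST k. free_hole \<omega> F (walk_pos \<omega> x k))) F
      else F)"

text \<open>Finite-volume golf process: only the balls in [-n, n] are active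
  (holes everywhere), they move in increasing order of their clocks
  (ties, a null event, broken by position). Result: the set of holes filled by time 1.\<close>
definition filled_window :: "golf_omega \<Rightarrow> nat \<Rightarrow> int set" where
  "filled_window \<omega> n =
     fold (move_ball \<omega>) (sort_key (clk \<omega>) (filter (\<lambda>x. eta \<omega> x = 1) [- int n..int n])) {}"

text \<open>H^1: holes free at time 1 in the process on Z, obtained as the
  limit of the finite-volume processes.\<close>
definition H1 :: "golf_omega \<Rightarrow> int set" where
  "H1 \<omega> = {x. eta \<omega> x = -1 \<and> (\<forall>\<^sub>F n in sequentially. x \<notin> filled_window \<omega> n)}"

definition separator :: "golf_omega \<Rightarrow> int \<Rightarrow> bool" where
  "separator \<omega> v \<longleftrightarrow> eta \<omega> v = -1
     \<and> (\<forall>k<v. (\<Sum>j\<in>{k..v-1}. eta \<omega> j) \<le> 0)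
     \<and> (\<forall>k>v. (\<Sum>j\<in>{v+1..k}. eta \<omega> j) \<le> 0)"

end

theory Submission
  imports Defs
begin

(*
  For a separator v every interval [a, v-1] contains at least as many holes as balls, and
  symmetrically on the right. Let the balls of a finite window move one after another and keep
  track of the filled holes F and the moved balls S. Call [a, v-1] sealed if a-1 is a free hole
  or nothing has happened left of a: no ball can enter it from the left, so it contains at most
  as many filled holes as moved balls. A ball from the left of v that reached v would have found
  every hole between the leftmost point of its path and v filled; sealing that stretch gives an
  interval with more balls than holes. Reflecting x to -x handles the balls from the right, so a
  separator is never filled and lies in H1.

  Since rho_b < rho_h, the sums of eta along a ray form a walk with negative drift for which
  (rho_b/rho_h)^j is harmonic, so the walk ever climbs j with probability at most
  (rho_b/rho_h)^j. The centre of a block of 2r+1 holes, from whose ends the outward walks never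
  climb r+1, is a separator. Among m disjoint blocks beyond N, none is of this kind with
  probability at most (1 - rho_h^(2r+1))^m + 2 m rho_h^(2r+1) (rho_b/rho_h)^(r+1), and this can
  be made arbitrarily small. Hence separators, and with them free holes, occur almost surely
  arbitrarily far out on both sides.
*)

section \<open>Separators are never filled\<close>

(* move_ball with the hole predicate and the walks as parameters, so that every statement can be
   reflected through x |-> -x *)
definition settle :: "(int \<Rightarrow> bool) \<Rightarrow> (int \<Rightarrow> nat \<Rightarrow> int) \<Rightarrow> int \<Rightarrow> int set \<Rightarrow> int set" where
  "settle is_hole w x F =
     (if \<exists>k. is_hole (w x k) \<and> w x k \<notin> F
      then insert (w x (LEAST k. is_hole (w x k) \<and> w x k \<notin> F)) F else F)"

lemma move_ball_eq_settle: "move_ball \<omega> = settle (\<lambda>y. eta \<omega> y = -1) (walk_pos \<omega>)"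
  by (intro ext) (simp only: move_ball_def settle_def free_hole_def)

lemma settle_cases:
  obtains "settle is_hole w x F = F"
  | k where "settle is_hole w x F = insert (w x k) F" "is_hole (w x k)" "w x k \<notin> F"
      "\<And>t. t < k \<Longrightarrow> is_hole (w x t) \<Longrightarrow> w x t \<in> F"
proof (cases "\<exists>k. is_hole (w x k) \<and> w x k \<notin> F")
  case True
  define k where "k = (LEAST k. is_hole (w x k) \<and> w x k \<notin> F)"
  have "is_hole (w x k) \<and> w x k \<notin> F"
    unfolding k_def using True by (rule LeastI_ex)
  moreover have "w x t \<in> F" if "t < k" "is_hole (w x t)" for t
    using not_less_Least[OF that(1)[unfolded k_def]] that(2) by blast
  moreover have "settle is_hole w x F = insert (w x k) F"
    using True by (simp add: settle_def k_def)
  ultimately show ?thesis using that(2) by blast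
next
  case False
  then have "settle is_hole w x F = F" by (auto simp: settle_def)
  then show ?thesis by (rule that(1))
qed

lemma settle_mono: "F \<subseteq> settle is_hole w x F"
  by (cases rule: settle_cases[of is_hole w x F]) auto

lemma finite_settle: "finite F \<Longrightarrow> finite (settle is_hole w x F)"
  by (cases rule: settle_cases[of is_hole w x F]) auto

lemma settle_mirror:
  "settle (\<lambda>y. is_hole (-y)) (\<lambda>x k. - w (-x) k) (-x) (uminus ` F) = uminus ` settle is_hole w x F"
  by (auto simp: settle_def inj_image_mem_iff)

locale nearest_neighbour_walks =
  fixes w :: "int \<Rightarrow> nat \<Rightarrow> int"
  assumes start: "w x 0 = x" and step: "\<bar>w x (Suc k) - w x k\<bar> \<le> 1"
begin

lemma walk_visits:
  assumes "i \<le> k" "w x i \<le> y" "y \<le> w x k"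
  obtains t where "i \<le> t" "t \<le> k" "w x t = y"
  using nat_intermed_int_val[of i k "w x" y] step assms by auto

lemma passed_holes_filled:
  assumes before: "\<And>t. t < k \<Longrightarrow> is_hole (w x t) \<Longrightarrow> w x t \<in> F"
    and "i \<le> k" "w x i \<le> y" "y < w x k" "is_hole y"
  shows "y \<in> F"
proof -
  obtain t where t: "t \<le> k" "w x t = y"
    using walk_visits[of i k x y] assms(2-4) by auto
  with \<open>y < w x k\<close> have "t < k" by (cases "t = k") auto
  with t \<open>is_hole y\<close> show ?thesis using before by blast
qed

end

lemma nearest_neighbour_walks_mirror:
  "nearest_neighbour_walks w \<Longrightarrow> nearest_neighbour_walks (\<lambda>x k. - w (-x) k)"
  unfolding nearest_neighbour_walks_def by (simp add: abs_minus_commute)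

lemma nearest_neighbour_walks_walk_pos: "nearest_neighbour_walks (walk_pos \<omega>)"
  by unfold_locales (simp_all add: walk_pos_def)

(* With F the filled holes and S the moved balls, no ball can enter [a, ...] from the left: it
   would stop at the free hole a-1, or nothing has happened left of a. *)
definition sealed :: "(int \<Rightarrow> bool) \<Rightarrow> int set \<Rightarrow> int set \<Rightarrow> int \<Rightarrow> bool" where
  "sealed is_hole F S a \<longleftrightarrow> (is_hole (a - 1) \<and> a - 1 \<notin> F) \<or> (\<forall>y\<in>F \<union> S. a \<le> y)"

lemma sealed_antimono: "F \<subseteq> F' \<Longrightarrow> S \<subseteq> S' \<Longrightarrow> sealed is_hole F' S' a \<Longrightarrow> sealed is_hole F S a"
  unfolding sealed_def by blast

definition left_balanced :: "(int \<Rightarrow> bool) \<Rightarrow> int \<Rightarrow> int set \<Rightarrow> int set \<Rightarrow> bool" where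
  "left_balanced is_hole v F S \<longleftrightarrow>
     (\<forall>a<v. sealed is_hole F S a \<longrightarrow> card (F \<inter> {a..v-1}) \<le> card (S \<inter> {a..v-1}))"

definition left_dominated :: "(int \<Rightarrow> bool) \<Rightarrow> (int \<Rightarrow> bool) \<Rightarrow> int \<Rightarrow> bool" where
  "left_dominated is_hole is_ball v \<longleftrightarrow>
     (\<forall>a<v. card {j\<in>{a..v-1}. is_ball j} \<le> card {j\<in>{a..v-1}. is_hole j})"

lemma sealed_interval_below:
  assumes "finite F" "finite S" "left_balanced is_hole v F S" "m < v"
    and filled: "\<And>y. m \<le> y \<Longrightarrow> y < v \<Longrightarrow> is_hole y \<Longrightarrow> y \<in> F"
  obtains a where "a \<le> m" "card {j\<in>{a..v-1}. is_hole j} \<le> card (S \<inter> {a..v-1})"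
proof -
  obtain B where B: "\<And>y. y \<in> F \<union> S \<Longrightarrow> B \<le> y"
    using bdd_below_finite[of "F \<union> S"] assms(1,2) unfolding bdd_below_def by auto
  define d where "d = (LEAST d. sealed is_hole F S (m - int d))"
  have "sealed is_hole F S (m - int (nat (m - B)))"
    unfolding sealed_def using B by force
  then have sealed_d: "sealed is_hole F S (m - int d)"
    unfolding d_def by (rule LeastI)
  have below_filled: "y \<in> F" if "m - int d \<le> y" "y < v" "is_hole y" for y
  proof (cases "m \<le> y")
    case True
    with that filled show ?thesis by blast
  next
    case False
    with that(1) have "nat (m - y - 1) < d" by auto
    then have "\<not> sealed is_hole F S (m - int (nat (m - y - 1)))"
      unfolding d_def by (rule not_less_Least)
    with False that(3) show ?thesis by (simp add: sealed_def)
  qed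
  have "card {j\<in>{m - int d..v-1}. is_hole j} \<le> card (F \<inter> {m - int d..v-1})"
    by (rule card_mono) (use below_filled in auto)
  also have "\<dots> \<le> card (S \<inter> {m - int d..v-1})"
    using assms(3) sealed_d \<open>m < v\<close> unfolding left_balanced_def by auto
  finally show ?thesis using that[of "m - int d"] by simp
qed

context nearest_neighbour_walks
begin

lemma settle_stays_left:
  assumes "finite F" "finite S" "S \<subseteq> Collect is_ball" "x \<notin> S" "is_ball x" "x < v"
    and "is_hole v" "v \<notin> F" "left_dominated is_hole is_ball v" "left_balanced is_hole v F S"
  shows "settle is_hole w x F \<subseteq> F \<union> {..<v}"
proof (cases rule: settle_cases[of is_hole w x F])
  case 1
  then show ?thesis by simp
next
  case (2 k)
  have "w x k < v"
  proof (rule ccontr)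
    assume "\<not> w x k < v"
    then obtain t where t: "t \<le> k" "w x t = v"
      using walk_visits[of 0 k x v] start \<open>x < v\<close> by auto
    with 2(4) \<open>is_hole v\<close> \<open>v \<notin> F\<close> have "w x k = v"
      by (cases "t = k") auto
    define m where "m = Min (w x ` {..k})"
    have "m \<in> w x ` {..k}"
      unfolding m_def by (rule Min_in) auto
    then obtain i where i: "i \<le> k" "w x i = m" by auto
    have "m \<le> w x 0"
      unfolding m_def by (rule Min_le) auto
    then have "m \<le> x" using start by simp
    have filled: "y \<in> F" if "m \<le> y" "y < v" "is_hole y" for y
      using passed_holes_filled[OF 2(4) i(1), where y=y] i(2) \<open>w x k = v\<close> that by auto
    have "m < v" using \<open>m \<le> x\<close> \<open>x < v\<close> by simp
    then obtain a where a: "a \<le> m" "card {j\<in>{a..v-1}. is_hole j} \<le> card (S \<inter> {a..v-1})"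
      using sealed_interval_below[OF assms(1,2,10) _ filled] by blast
    have "S \<inter> {a..v-1} \<subset> {j\<in>{a..v-1}. is_ball j}"
      using assms(3-6) a(1) \<open>m \<le> x\<close> by auto
    then have "card (S \<inter> {a..v-1}) < card {j\<in>{a..v-1}. is_ball j}"
      by (rule psubset_card_mono[rotated]) (rule finite_subset[of _ "{a..v-1}"], auto)
    moreover have "card {j\<in>{a..v-1}. is_ball j} \<le> card {j\<in>{a..v-1}. is_hole j}"
      using assms(9) a(1) \<open>m \<le> x\<close> \<open>x < v\<close> unfolding left_dominated_def by auto
    ultimately show False using a(2) by simp
  qed
  then show ?thesis using 2(1) by auto
qed

lemma start_in_sealed_interval:
  assumes before: "\<And>t. t < k \<Longrightarrow> is_hole (w x t) \<Longrightarrow> w x t \<in> F"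
    and "a \<le> w x k" "x \<in> S" "sealed is_hole F S a"
  shows "a \<le> x"
proof (rule ccontr)
  assume "\<not> a \<le> x"
  then have "is_hole (a - 1) \<longrightarrow> a - 1 \<in> F"
    using passed_holes_filled[OF before, where i=0 and y="a - 1"] start \<open>a \<le> w x k\<close> by auto
  with \<open>sealed is_hole F S a\<close> \<open>x \<in> S\<close> \<open>\<not> a \<le> x\<close> show False
    unfolding sealed_def by auto
qed

lemma left_balanced_settle:
  assumes "left_balanced is_hole v F S" "x \<notin> S"
    and side: "x < v \<or> settle is_hole w x F \<subseteq> F \<union> {v<..}"
  shows "left_balanced is_hole v (settle is_hole w x F) (insert x S)"
  unfolding left_balanced_def
proof (intro allI impI)
  fix a
  assume "a < v" and sealed': "sealed is_hole (settle is_hole w x F) (insert x S) a"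
  have sealed: "sealed is_hole F (insert x S) a"
    by (rule sealed_antimono[OF settle_mono _ sealed']) simp
  have "sealed is_hole F S a"
    by (rule sealed_antimono[OF order_refl _ sealed]) auto
  with assms(1) \<open>a < v\<close> have old: "card (F \<inter> {a..v-1}) \<le> card (S \<inter> {a..v-1})"
    unfolding left_balanced_def by blast
  have grow: "card (S \<inter> {a..v-1}) \<le> card (insert x S \<inter> {a..v-1})"
    by (intro card_mono) auto
  show "card (settle is_hole w x F \<inter> {a..v-1}) \<le> card (insert x S \<inter> {a..v-1})"
  proof (cases rule: settle_cases[of is_hole w x F])
    case 1
    then show ?thesis using old grow by simp
  next
    case (2 k)
    show ?thesis
    proof (cases "w x k \<in> {a..v-1}")
      case False
      then have "settle is_hole w x F \<inter> {a..v-1} = F \<inter> {a..v-1}" using 2(1) by auto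
      then show ?thesis using old grow by simp
    next
      case True
      with side 2(1,3) have "x < v" by auto
      moreover have "a \<le> x"
        by (rule start_in_sealed_interval[OF 2(4) _ _ sealed]) (use True in auto)
      ultimately show ?thesis
        using True 2(1,3) \<open>x \<notin> S\<close> old by (simp add: card_insert_if Int_insert_left)
    qed
  qed
qed

end

definition separating :: "(int \<Rightarrow> bool) \<Rightarrow> (int \<Rightarrow> bool) \<Rightarrow> int \<Rightarrow> bool" where
  "separating is_hole is_ball v \<longleftrightarrow> is_hole v \<and> left_dominated is_hole is_ball v
     \<and> left_dominated (\<lambda>y. is_hole (-y)) (\<lambda>y. is_ball (-y)) (-v)"

(* The second balance condition is the first one reflected through x |-> -x, i.e. it concerns
   the intervals [v+1, b]. *)
definition separator_invariant ::
    "(int \<Rightarrow> bool) \<Rightarrow> (int \<Rightarrow> bool) \<Rightarrow> int \<Rightarrow> int set \<Rightarrow> int set \<Rightarrow> bool" where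
  "separator_invariant is_hole is_ball v F S \<longleftrightarrow>
     finite F \<and> finite S \<and> S \<subseteq> Collect is_ball \<and> v \<notin> F \<and> left_balanced is_hole v F S
     \<and> left_balanced (\<lambda>y. is_hole (-y)) (-v) (uminus ` F) (uminus ` S)"

context nearest_neighbour_walks
begin

lemma separator_invariant_settle:
  assumes sep: "separating is_hole is_ball v" and "is_ball x" "x \<noteq> v" "x \<notin> S"
    and inv: "separator_invariant is_hole is_ball v F S"
  shows "separator_invariant is_hole is_ball v (settle is_hole w x F) (insert x S)"
proof -
  interpret mirror: nearest_neighbour_walks "\<lambda>x k. - w (-x) k"
    by (rule nearest_neighbour_walks_mirror) (rule nearest_neighbour_walks_axioms)
  let ?F' = "settle is_hole w x F"
  have mirror_eq: "settle (\<lambda>y. is_hole (-y)) (\<lambda>x k. - w (-x) k) (-x) (uminus ` F) = uminus ` ?F'"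
    by (rule settle_mirror)
  have left: "?F' \<subseteq> F \<union> {..<v}" if "x < v"
    by (rule settle_stays_left[where is_ball=is_ball]) (use sep inv assms(2,4) that in
        \<open>auto simp: separating_def separator_invariant_def\<close>)
  have right: "?F' \<subseteq> F \<union> {v<..}" if "v < x"
  proof -
    have "uminus ` ?F' \<subseteq> uminus ` F \<union> {..<-v}"
      unfolding mirror_eq[symmetric]
      by (rule mirror.settle_stays_left[where is_ball="\<lambda>y. is_ball (-y)" and
            F="uminus ` F" and S="uminus ` S"]) (use sep inv assms(2,4) that in
          \<open>auto simp: separating_def separator_invariant_def\<close>)
    then show ?thesis by auto
  qed
  have "v \<notin> ?F'"
    using left right inv \<open>x \<noteq> v\<close> unfolding separator_invariant_def
    by (cases "x < v") auto
  moreover have "left_balanced is_hole v ?F' (insert x S)"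
    by (rule left_balanced_settle) (use inv right \<open>x \<noteq> v\<close> \<open>x \<notin> S\<close> in
        \<open>auto simp: separator_invariant_def\<close>)
  moreover have "left_balanced (\<lambda>y. is_hole (-y)) (-v) (uminus ` ?F') (insert (-x) (uminus ` S))"
    unfolding mirror_eq[symmetric]
    by (rule mirror.left_balanced_settle) (use inv left \<open>x \<noteq> v\<close> \<open>x \<notin> S\<close> in
        \<open>auto simp: separator_invariant_def mirror_eq inj_image_mem_iff\<close>)
  ultimately show ?thesis
    using inv \<open>is_ball x\<close> finite_settle unfolding separator_invariant_def by auto
qed

lemma separator_invariant_fold:
  assumes "separating is_hole is_ball v"
  shows "distinct xs \<Longrightarrow> set xs \<subseteq> Collect is_ball - insert v S
    \<Longrightarrow> separator_invariant is_hole is_ball v F S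
    \<Longrightarrow> separator_invariant is_hole is_ball v (fold (settle is_hole w) xs F) (S \<union> set xs)"
proof (induction xs arbitrary: F S)
  case Nil
  then show ?case by simp
next
  case (Cons x xs)
  have "separator_invariant is_hole is_ball v (settle is_hole w x F) (insert x S)"
    by (rule separator_invariant_settle[OF assms]) (use Cons.prems in auto)
  from Cons.IH[OF _ _ this] Cons.prems show ?case by auto
qed

end

lemma card_filter_reflect: "card {j\<in>{a..b}. P (- j)} = card {j::int\<in>{-b..-a}. P j}"
proof -
  have "card (uminus -` {j\<in>{-b..-a}. P j}) = card {j\<in>{-b..-a}. P j}"
    by (rule card_vimage_inj) (auto simp: inj_def image_iff intro: exI[of _ "- _"])
  moreover have "uminus -` {j\<in>{-b..-a}. P j} = {j\<in>{a..b}. P (- j)}" by auto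
  ultimately show ?thesis by simp
qed

lemma sum_sign_count:
  fixes f :: "'a \<Rightarrow> int"
  assumes "finite A" "\<And>j. j \<in> A \<Longrightarrow> f j \<in> {-1, 0, 1}"
  shows "(\<Sum>j\<in>A. f j) = int (card {j\<in>A. f j = 1}) - int (card {j\<in>A. f j = -1})"
proof -
  have "(\<Sum>j\<in>A. f j) = (\<Sum>j\<in>A. (if f j = 1 then 1 else 0) - (if f j = -1 then 1 else 0))"
    using assms(2) by (intro sum.cong) auto
  also have "\<dots> = int (card {j\<in>A. f j = 1}) - int (card {j\<in>A. f j = -1})"
    using assms(1) by (simp add: sum_subtractf sum.If_cases Int_def)
  finally show ?thesis .
qed

lemma separator_separating:
  assumes vals: "\<And>x. eta \<omega> x \<in> {-1, 0, 1}" and "separator \<omega> v"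
  shows "separating (\<lambda>y. eta \<omega> y = -1) (\<lambda>y. eta \<omega> y = 1) v"
proof -
  have count: "card {j\<in>A. eta \<omega> j = 1} \<le> card {j\<in>A. eta \<omega> j = -1}"
    if "finite A" "(\<Sum>j\<in>A. eta \<omega> j) \<le> 0" for A
    using sum_sign_count[of A "eta \<omega>"] vals that by simp
  have "left_dominated (\<lambda>y. eta \<omega> y = -1) (\<lambda>y. eta \<omega> y = 1) v"
    unfolding left_dominated_def
  proof (intro allI impI)
    fix a assume "a < v"
    then show "card {j\<in>{a..v-1}. eta \<omega> j = 1} \<le> card {j\<in>{a..v-1}. eta \<omega> j = -1}"
      using count[of "{a..v-1}"] \<open>separator \<omega> v\<close> unfolding separator_def by blast
  qed
  moreover have "left_dominated (\<lambda>y. eta \<omega> (-y) = -1) (\<lambda>y. eta \<omega> (-y) = 1) (-v)"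
    unfolding left_dominated_def
  proof (intro allI impI)
    fix a assume "a < -v"
    then have "card {j\<in>{v+1..-a}. eta \<omega> j = 1} \<le> card {j\<in>{v+1..-a}. eta \<omega> j = -1}"
      using count[of "{v+1..-a}"] \<open>separator \<omega> v\<close> unfolding separator_def by auto
    then show "card {j\<in>{a..-v-1}. eta \<omega> (-j) = 1} \<le> card {j\<in>{a..-v-1}. eta \<omega> (-j) = -1}"
      using card_filter_reflect[of a "-v-1" "\<lambda>j. eta \<omega> j = 1"]
        card_filter_reflect[of a "-v-1" "\<lambda>j. eta \<omega> j = -1"] by (simp add: add.commute)
  qed
  ultimately show ?thesis
    using \<open>separator \<omega> v\<close> unfolding separating_def separator_def by simp
qed

theorem separator_in_H1:
  assumes "\<And>x. eta \<omega> x \<in> {-1, 0, 1}" and "separator \<omega> v"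
  shows "v \<in> H1 \<omega>"
proof -
  interpret nearest_neighbour_walks "walk_pos \<omega>" by (rule nearest_neighbour_walks_walk_pos)
  have sep: "separating (\<lambda>y. eta \<omega> y = -1) (\<lambda>y. eta \<omega> y = 1) v"
    using assms by (rule separator_separating)
  have "v \<notin> filled_window \<omega> n" for n
  proof -
    define xs where "xs = sort_key (clk \<omega>) (filter (\<lambda>x. eta \<omega> x = 1) [- int n..int n])"
    have "separator_invariant (\<lambda>y. eta \<omega> y = -1) (\<lambda>y. eta \<omega> y = 1) v
        (fold (settle (\<lambda>y. eta \<omega> y = -1) (walk_pos \<omega>)) xs {}) ({} \<union> set xs)"
      by (rule separator_invariant_fold[OF sep]) (use sep in
          \<open>auto simp: xs_def separating_def separator_invariant_def left_balanced_def\<close>)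
    then show ?thesis
      unfolding filled_window_def move_ball_eq_settle xs_def separator_invariant_def by simp
  qed
  then show ?thesis
    using sep unfolding H1_def separating_def by simp
qed

section \<open>Independence of the sites\<close>

definition state_prob :: "real \<Rightarrow> real \<Rightarrow> int \<Rightarrow> real" where
  "state_prob \<rho>b \<rho>h s =
     (if s = 1 then \<rho>b else if s = -1 then \<rho>h else if s = 0 then 1 - \<rho>b - \<rho>h else 0)"

lemma state_law_eq: "state_law \<rho>b \<rho>h = measure_pmf (embed_pmf (state_prob \<rho>b \<rho>h))"
  unfolding state_law_def state_prob_def ..

lemma prob_space_clock_law: "prob_space clock_law"
  unfolding clock_law_def by (rule prob_space_uniform_measure) auto

lemma prob_space_walk_law: "prob_space (walk_law p)"
  unfolding walk_law_def by (rule prob_space_PiM) (simp add: prob_space_measure_pmf)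

lemma space_clock_walk: "space (clock_law \<Otimes>\<^sub>M walk_law p) = UNIV"
  by (simp add: space_pair_measure clock_law_def walk_law_def space_PiM)

lemma prob_space_site_law: "prob_space (site_law \<rho>b \<rho>h p)"
  unfolding site_law_def state_law_eq
  by (intro prob_space_pair prob_space_measure_pmf prob_space_clock_law prob_space_walk_law)

lemma space_site_law: "space (site_law \<rho>b \<rho>h p) = UNIV"
proof -
  have "space (site_law \<rho>b \<rho>h p) = space (state_law \<rho>b \<rho>h) \<times> space (clock_law \<Otimes>\<^sub>M walk_law p)"
    unfolding site_law_def by (rule space_pair_measure)
  then show ?thesis by (simp add: space_clock_walk state_law_def)
qed

lemma sets_site_law_state: "A \<times> UNIV \<in> sets (site_law \<rho>b \<rho>h p)"
proof -
  have "A \<times> space (clock_law \<Otimes>\<^sub>M walk_law p) \<in> sets (site_law \<rho>b \<rho>h p)"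
    unfolding site_law_def by (rule pair_measureI) (auto simp: state_law_def)
  then show ?thesis by (simp only: space_clock_walk)
qed

lemma emeasure_site_law_state:
  "emeasure (site_law \<rho>b \<rho>h p) (A \<times> UNIV) = emeasure (state_law \<rho>b \<rho>h) A"
proof -
  interpret CW: prob_space "clock_law \<Otimes>\<^sub>M walk_law p"
    by (intro prob_space_pair prob_space_clock_law prob_space_walk_law)
  have "emeasure (site_law \<rho>b \<rho>h p) (A \<times> space (clock_law \<Otimes>\<^sub>M walk_law p))
      = emeasure (state_law \<rho>b \<rho>h) A * emeasure (clock_law \<Otimes>\<^sub>M walk_law p) (space (clock_law \<Otimes>\<^sub>M walk_law p))"
    unfolding site_law_def by (rule CW.emeasure_pair_measure_Times) (simp_all add: state_law_def)
  then show ?thesis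
    unfolding CW.emeasure_space_1 by (simp only: space_clock_walk mult_1_right)
qed

definition eta_determined :: "int set \<Rightarrow> golf_omega set \<Rightarrow> bool" where
  "eta_determined K A \<longleftrightarrow> (\<forall>\<omega> \<omega>'. (\<forall>j\<in>K. eta \<omega> j = eta \<omega>' j) \<longrightarrow> (\<omega> \<in> A \<longleftrightarrow> \<omega>' \<in> A))"

lemma eta_determined_Compl: "eta_determined K A \<Longrightarrow> eta_determined K (- A)"
  unfolding eta_determined_def by blast

lemma eta_determined_INT:
  assumes "\<And>i. i \<in> I \<Longrightarrow> eta_determined (K i) (A i)"
  shows "eta_determined (\<Union>i\<in>I. K i) (\<Inter>i\<in>I. A i)"
  unfolding eta_determined_def
proof (intro allI impI)
  fix \<omega> \<omega>' assume agree: "\<forall>j\<in>(\<Union>i\<in>I. K i). eta \<omega> j = eta \<omega>' j"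
  have "\<omega> \<in> A i \<longleftrightarrow> \<omega>' \<in> A i" if "i \<in> I" for i
    using assms[OF that] agree that unfolding eta_determined_def by blast
  then show "\<omega> \<in> (\<Inter>i\<in>I. A i) \<longleftrightarrow> \<omega>' \<in> (\<Inter>i\<in>I. A i)" by blast
qed

section \<open>Walks along rays and blocks of holes\<close>

definition ray_sum :: "int \<Rightarrow> int \<Rightarrow> nat \<Rightarrow> golf_omega \<Rightarrow> int" where
  "ray_sum d e i \<omega> = (\<Sum>t\<in>{1..i}. eta \<omega> (e + d * int t))"

definition ray_reaches :: "int \<Rightarrow> int \<Rightarrow> nat \<Rightarrow> int \<Rightarrow> golf_omega set" where
  "ray_reaches d e n j = {\<omega>. \<exists>i\<le>n. j \<le> ray_sum d e i \<omega>}"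

definition ray_ever_reaches :: "int \<Rightarrow> int \<Rightarrow> int \<Rightarrow> golf_omega set" where
  "ray_ever_reaches d e j = {\<omega>. \<exists>i. j \<le> ray_sum d e i \<omega>}"

lemma ray_sum_add: "ray_sum d e (m + n) \<omega> = ray_sum d e m \<omega> + ray_sum d (e + d * int m) n \<omega>"
  unfolding ray_sum_def by (induction n) (simp_all add: algebra_simps)

lemma ray_sum_cong:
  assumes "\<And>t. 1 \<le> t \<Longrightarrow> t \<le> i \<Longrightarrow> eta \<omega> (e + d * int t) = eta \<omega>' (e + d * int t)"
  shows "ray_sum d e i \<omega> = ray_sum d e i \<omega>'"
  unfolding ray_sum_def using assms by (intro sum.cong) auto

lemma mem_ray_reaches_Suc:
  "\<omega> \<in> ray_reaches d e (Suc n) j \<longleftrightarrow> j \<le> 0 \<or> \<omega> \<in> ray_reaches d (e + d) n (j - eta \<omega> (e + d))"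
proof -
  have Suc: "ray_sum d e (Suc i) \<omega> = eta \<omega> (e + d) + ray_sum d (e + d) i \<omega>" for i
    using ray_sum_add[of d e 1 i \<omega>] by (simp add: ray_sum_def)
  have zero: "ray_sum d e 0 \<omega> = 0"
    by (simp add: ray_sum_def)
  have "(\<exists>i\<le>Suc n. j \<le> ray_sum d e i \<omega>) \<longleftrightarrow> j \<le> ray_sum d e 0 \<omega> \<or> (\<exists>i\<le>n. j \<le> ray_sum d e (Suc i) \<omega>)"
    by (simp only: less_Suc_eq_le[symmetric] Ex_less_Suc2)
  then show ?thesis
    unfolding ray_reaches_def mem_Collect_eq Suc zero by (simp add: diff_le_eq add.commute)
qed

lemma eta_determined_ray_reaches:
  "eta_determined ((\<lambda>t. e + d * int t) ` {1..n}) (ray_reaches d e n j)"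
  unfolding eta_determined_def
proof (intro allI impI)
  fix \<omega> \<omega>' assume agree: "\<forall>k\<in>(\<lambda>t. e + d * int t) ` {1..n}. eta \<omega> k = eta \<omega>' k"
  have "ray_sum d e i \<omega> = ray_sum d e i \<omega>'" if "i \<le> n" for i
    using agree that by (intro ray_sum_cong) auto
  then show "\<omega> \<in> ray_reaches d e n j \<longleftrightarrow> \<omega>' \<in> ray_reaches d e n j"
    unfolding ray_reaches_def by auto
qed

lemma eta_determined_ray_ever_reaches:
  "eta_determined ((\<lambda>t. e + d * int t) ` {1..}) (ray_ever_reaches d e j)"
  unfolding eta_determined_def
proof (intro allI impI)
  fix \<omega> \<omega>' assume agree: "\<forall>k\<in>(\<lambda>t. e + d * int t) ` {1..}. eta \<omega> k = eta \<omega>' k"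
  have "ray_sum d e i \<omega> = ray_sum d e i \<omega>'" for i
    using agree by (intro ray_sum_cong) auto
  then show "\<omega> \<in> ray_ever_reaches d e j \<longleftrightarrow> \<omega>' \<in> ray_ever_reaches d e j"
    unfolding ray_ever_reaches_def by auto
qed

lemma sum_left_eq_ray_sum: "k \<le> v \<Longrightarrow> (\<Sum>j\<in>{k..v-1}. eta \<omega> j) = ray_sum (-1) v (nat (v - k)) \<omega>"
  unfolding ray_sum_def
  by (rule sum.reindex_bij_witness[where i="\<lambda>t. v - int t" and j="\<lambda>j. nat (v - j)"]) auto

lemma sum_right_eq_ray_sum: "v \<le> k \<Longrightarrow> (\<Sum>j\<in>{v+1..k}. eta \<omega> j) = ray_sum 1 v (nat (k - v)) \<omega>"
  unfolding ray_sum_def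
  by (rule sum.reindex_bij_witness[where i="\<lambda>t. v + int t" and j="\<lambda>j. nat (j - v)"]) auto

lemma separatorI_ray_sums:
  assumes "eta \<omega> v = -1" "\<And>i. ray_sum (-1) v i \<omega> \<le> 0" "\<And>i. ray_sum 1 v i \<omega> \<le> 0"
  shows "separator \<omega> v"
  using assms by (simp add: separator_def sum_left_eq_ray_sum sum_right_eq_ray_sum)

lemma ray_sum_nonpos_beyond_holes:
  assumes holes: "\<And>t. 1 \<le> t \<Longrightarrow> t \<le> r \<Longrightarrow> eta \<omega> (v + d * int t) = -1"
    and "\<omega> \<notin> ray_ever_reaches d (v + d * int r) (int r + 1)"
  shows "ray_sum d v i \<omega> \<le> 0"
proof -
  have run: "ray_sum d v i \<omega> = - int i" if "i \<le> r" for i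
    using holes that by (simp add: ray_sum_def)
  show ?thesis
  proof (cases "i \<le> r")
    case False
    then obtain n where "i = r + n"
      using le_Suc_ex[of r i] by auto
    moreover have "ray_sum d (v + d * int r) n \<omega> \<le> int r"
      using assms(2) by (auto simp: ray_ever_reaches_def not_le)
    ultimately show ?thesis
      using run[of r] by (simp add: ray_sum_add)
  qed (simp add: run)
qed

definition hole_block :: "int \<Rightarrow> nat \<Rightarrow> golf_omega set" where
  "hole_block u r = {\<omega>. \<forall>t\<in>{u - int r..u + int r}. eta \<omega> t = -1}"

definition good_block :: "int \<Rightarrow> nat \<Rightarrow> golf_omega set" where
  "good_block u r = hole_block u r - ray_ever_reaches (-1) (u - int r) (int r + 1)
     - ray_ever_reaches 1 (u + int r) (int r + 1)"

lemma separator_of_good_block: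
  assumes "\<omega> \<in> good_block u r"
  shows "separator \<omega> u"
proof (rule separatorI_ray_sums)
  show "eta \<omega> u = -1"
    using assms by (simp add: good_block_def hole_block_def)
  show "ray_sum (-1) u i \<omega> \<le> 0" for i
    by (rule ray_sum_nonpos_beyond_holes[where r=r])
       (use assms in \<open>auto simp: good_block_def hole_block_def\<close>)
  show "ray_sum 1 u i \<omega> \<le> 0" for i
    by (rule ray_sum_nonpos_beyond_holes[where r=r])
       (use assms in \<open>auto simp: good_block_def hole_block_def\<close>)
qed

lemma exists_trial_count:
  fixes g :: real
  assumes "0 < g" "g \<le> 1"
  obtains m :: nat where "(1 - g) ^ m \<le> exp (- real K)" "real m * g \<le> real K + 1"
proof
  define m where "m = nat \<lceil>real K / g\<rceil>"
  have "real K / g \<le> real m"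
    unfolding m_def by (rule real_nat_ceiling_ge)
  moreover have "real m < real K / g + 1"
  proof -
    have "real m = of_int \<lceil>real K / g\<rceil>"
      using assms unfolding m_def by simp
    then show ?thesis using ceiling_correct[of "real K / g"] by linarith
  qed
  ultimately have "real K \<le> real m * g" and upper: "real m * g \<le> real K + 1"
    using assms by (simp_all add: field_simps)
  have "(1 - g) ^ m \<le> exp (- g) ^ m"
    using assms by (intro power_mono) (auto simp: exp_ge_add_one_self[of "- g", simplified])
  also have "\<dots> = exp (- (real m * g))"
    by (simp add: exp_of_nat_mult[symmetric])
  also have "\<dots> \<le> exp (- real K)"
    using \<open>real K \<le> real m * g\<close> by simp
  finally show "(1 - g) ^ m \<le> exp (- real K)" .
  show "real m * g \<le> real K + 1" by (fact upper)
qed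

(* Taking m about K / g r makes the first term at most exp (- K) and the second about K * \<delta> r. *)
lemma nonpos_if_trial_bounds:
  fixes z :: real and g \<delta> :: "nat \<Rightarrow> real"
  assumes g: "\<And>r. 0 < g r" "\<And>r. g r \<le> 1" and \<delta>: "\<delta> \<longlonglongrightarrow> 0" "\<And>r. 0 \<le> \<delta> r"
    and bound: "\<And>r m. z \<le> (1 - g r) ^ m + real m * g r * \<delta> r"
  shows "z \<le> 0"
proof (rule ccontr)
  assume "\<not> z \<le> 0"
  then have "0 < z" by simp
  obtain K :: nat where "2 / z < real K"
    using reals_Archimedean2 by blast
  then have "2 / z < exp (real K)"
    using exp_ge_add_one_self[of "real K"] by linarith
  then have K: "exp (- real K) < z / 2"
    using \<open>0 < z\<close> by (simp add: exp_minus field_simps)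
  have "eventually (\<lambda>r. \<delta> r < z / (2 * (real K + 1))) sequentially"
    using \<delta>(1) \<open>0 < z\<close> by (intro order_tendstoD) auto
  then obtain r where r: "\<delta> r * (real K + 1) < z / 2"
    by (auto simp: eventually_sequentially field_simps)
  obtain m where m: "(1 - g r) ^ m \<le> exp (- real K)" "real m * g r \<le> real K + 1"
    using exists_trial_count[OF g] by blast
  have "real m * g r * \<delta> r \<le> (real K + 1) * \<delta> r"
    using m(2) \<delta>(2) by (intro mult_right_mono) auto
  then show False
    using bound[of r m] m(1) K r by (simp add: algebra_simps)
qed

definition block_center :: "int \<Rightarrow> int \<Rightarrow> nat \<Rightarrow> nat \<Rightarrow> int" where
  "block_center s N r i = s * (N + 1 + int r + int i * (2 * int r + 1))"

lemma block_center_beyond: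
  assumes "s \<in> {-1, 1}"
  shows "N < s * block_center s N r i"
proof -
  have "s * block_center s N r i = N + 1 + int r + int i * (2 * int r + 1)"
    using assms unfolding block_center_def by auto
  moreover have "0 \<le> int i * (2 * int r + 1)" by simp
  ultimately show ?thesis by linarith
qed

lemma block_center_disjoint:
  assumes "s \<in> {-1, 1}" "i < j"
  shows "{block_center s N r i - int r..block_center s N r i + int r}
    \<inter> {block_center s N r j - int r..block_center s N r j + int r} = {}"
proof -
  have "(int i + 1) * (2 * int r + 1) \<le> int j * (2 * int r + 1)"
    using assms(2) by (intro mult_right_mono) auto
  then show ?thesis using assms(1) unfolding block_center_def by (auto simp: algebra_simps)
qed

section \<open>Separators occur arbitrarily far out\<close>

locale golf =
  fixes \<rho>b \<rho>h p :: real
  assumes ball_nonneg: "0 \<le> \<rho>b" and ball_less_hole: "\<rho>b < \<rho>h" and density_sum: "\<rho>b + \<rho>h \<le> 1"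
begin

lemma hole_density_pos: "0 < \<rho>h"
  using ball_nonneg ball_less_hole by simp

lemma drift_ratio_nonneg: "0 \<le> \<rho>b / \<rho>h"
  using ball_nonneg hole_density_pos by simp

lemma state_prob_nonneg: "0 \<le> state_prob \<rho>b \<rho>h s"
  using ball_nonneg ball_less_hole density_sum by (simp add: state_prob_def)

lemma state_prob_integral: "(\<integral>\<^sup>+x. ennreal (state_prob \<rho>b \<rho>h x) \<partial>count_space UNIV) = 1"
proof -
  have "(\<integral>\<^sup>+x. ennreal (state_prob \<rho>b \<rho>h x) \<partial>count_space UNIV)
      = (\<Sum>x\<in>{-1,0,1}. ennreal (state_prob \<rho>b \<rho>h x))"
    by (rule nn_integral_count_space') (auto simp: state_prob_def)
  also have "\<dots> = ennreal (\<Sum>x\<in>{-1,0,1}. state_prob \<rho>b \<rho>h x)"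
    by (rule sum_ennreal) (rule state_prob_nonneg)
  also have "(\<Sum>x\<in>{-1,0,1}. state_prob \<rho>b \<rho>h x) = 1"
    by (simp add: state_prob_def)
  finally show ?thesis by simp
qed

lemma pmf_state: "pmf (embed_pmf (state_prob \<rho>b \<rho>h)) s = state_prob \<rho>b \<rho>h s"
  by (rule pmf_embed_pmf[OF state_prob_nonneg state_prob_integral])

lemma set_pmf_state: "set_pmf (embed_pmf (state_prob \<rho>b \<rho>h)) \<subseteq> {-1, 0, 1}"
  by (auto simp: set_embed_pmf[OF state_prob_nonneg state_prob_integral] state_prob_def)

sublocale P: product_prob_space "\<lambda>_::int. site_law \<rho>b \<rho>h p" UNIV
  by (simp add: product_prob_space_def product_prob_space_axioms_def product_sigma_finite_def
      prob_space_site_law prob_space_imp_sigma_finite)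

abbreviation M where "M \<equiv> PiM (UNIV :: int set) (\<lambda>_. site_law \<rho>b \<rho>h p)"

lemma space_M: "space M = UNIV"
  by (simp add: space_PiM space_site_law)

lemma prob_eta_block:
  assumes "finite J"
  shows "P.prob {\<omega>. \<forall>i\<in>J. eta \<omega> i = a} = state_prob \<rho>b \<rho>h a ^ card J"
proof -
  have "{\<omega>. \<forall>i\<in>J. eta \<omega> i = a} = {\<omega>\<in>space M. \<forall>i\<in>J. \<omega> i \<in> {a} \<times> UNIV}"
    by (auto simp: eta_def space_M mem_Times_iff)
  then have "emeasure M {\<omega>. \<forall>i\<in>J. eta \<omega> i = a} = (\<Prod>i\<in>J. emeasure (state_law \<rho>b \<rho>h) {a})"
    using P.emeasure_PiM_Collect[of J "\<lambda>_. {a} \<times> UNIV"] assms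
    by (simp add: emeasure_site_law_state sets_site_law_state)
  also have "\<dots> = ennreal (state_prob \<rho>b \<rho>h a ^ card J)"
    by (simp add: state_law_eq emeasure_pmf_single pmf_state ennreal_power state_prob_nonneg)
  finally show ?thesis
    using state_prob_nonneg by (simp add: P.emeasure_eq_measure)
qed

lemma prob_eta: "P.prob {\<omega>. eta \<omega> x = a} = state_prob \<rho>b \<rho>h a"
  using prob_eta_block[of "{x}" a] by simp

lemma AE_eta_values: "AE \<omega> in M. \<forall>x. eta \<omega> x \<in> {-1, 0, 1}"
proof -
  have "measure (state_law \<rho>b \<rho>h) (- {-1, 0, 1}) = 0"
    using set_pmf_state unfolding state_law_eq measure_pmf_zero_iff by auto
  then have "emeasure (site_law \<rho>b \<rho>h p) ((- {-1, 0, 1}) \<times> UNIV) = 0"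
    unfolding emeasure_site_law_state state_law_eq by (simp add: measure_pmf.emeasure_eq_measure)
  then have "AE z in site_law \<rho>b \<rho>h p. fst z \<in> {-1, 0, 1}"
    by (intro AE_I'[of "(- {-1, 0, 1}) \<times> UNIV"]) (auto simp: sets_site_law_state)
  then have "AE \<omega> in M. eta \<omega> x \<in> {-1, 0, 1}" for x
    using P.AE_component[of x "\<lambda>z. fst z \<in> {-1, 0, 1}"] by (simp add: eta_def)
  then show ?thesis unfolding AE_all_countable ..
qed

lemma sets_eta_eq: "{\<omega>. eta \<omega> x = a} \<in> sets M"
proof -
  have "{\<omega>. eta \<omega> x = a} = (\<lambda>\<omega>. \<omega> x) -` ({a} \<times> UNIV) \<inter> space M"
    by (auto simp: eta_def space_M mem_Times_iff)
  also have "\<dots> \<in> sets M"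
    by (rule measurable_sets[OF measurable_component_singleton[of x UNIV] sets_site_law_state]) simp
  finally show ?thesis .
qed

lemma sets_eta_determined:
  assumes "finite K" and det: "eta_determined K A"
  shows "A \<in> sets M"
proof -
  define patterns where
    "patterns = {f \<in> PiE K (\<lambda>_. UNIV :: int set). \<exists>\<omega>\<in>A. \<forall>j\<in>K. eta \<omega> j = f j}"
  have "A = (\<Union>f\<in>patterns. {\<omega>. \<forall>j\<in>K. eta \<omega> j = f j})"
  proof safe
    fix \<omega> assume "\<omega> \<in> A"
    then have "restrict (eta \<omega>) K \<in> patterns" by (auto simp: patterns_def)
    then show "\<omega> \<in> (\<Union>f\<in>patterns. {\<omega>. \<forall>j\<in>K. eta \<omega> j = f j})" by (rule UN_I) simp
  next
    fix f \<omega> assume "f \<in> patterns" and \<omega>: "\<forall>j\<in>K. eta \<omega> j = f j"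
    then obtain \<omega>0 where "\<omega>0 \<in> A" and \<omega>0: "\<forall>j\<in>K. eta \<omega>0 j = f j"
      unfolding patterns_def by blast
    with det \<omega> \<open>\<omega>0 \<in> A\<close> show "\<omega> \<in> A" unfolding eta_determined_def by metis
  qed
  also have "\<dots> \<in> sets M"
  proof (rule sets.countable_UN'')
    show "countable patterns"
      unfolding patterns_def by (rule countable_subset[OF Collect_restrict countable_PiE]) (simp_all add: assms(1))
    show "{\<omega>. \<forall>j\<in>K. eta \<omega> j = f j} \<in> sets M" for f
    proof -
      have "{\<omega>\<in>space M. \<forall>j\<in>K. eta \<omega> j = f j} \<in> sets M"
        by (rule sets.sets_Collect_finite_All) (simp_all add: space_M sets_eta_eq \<open>finite K\<close>)
      then show ?thesis by (simp add: space_M)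
    qed
  qed
  finally show ?thesis .
qed

lemma indep_components: "P.indep_vars (\<lambda>_. site_law \<rho>b \<rho>h p) (\<lambda>i \<omega>. \<omega> i) UNIV"
proof -
  have "(\<lambda>x::golf_omega. \<lambda>i\<in>UNIV. x i) = (\<lambda>x. x)"
    by (auto simp: restrict_def)
  moreover have "PiM UNIV (\<lambda>i. distr M (site_law \<rho>b \<rho>h p) (\<lambda>\<omega>. \<omega> i)) = M"
    by (simp add: P.PiM_component)
  ultimately show ?thesis
    by (subst P.indep_vars_iff_distr_eq_PiM) auto
qed

lemma eta_determined_restrict_preimage:
  assumes "A \<in> sets M" "eta_determined K A"
  obtains A' where "A' \<in> sets (PiM K (\<lambda>_. site_law \<rho>b \<rho>h p))"
    "(\<lambda>\<omega>. restrict \<omega> K) -` A' \<inter> space M = A"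
proof
  define extend :: "golf_omega \<Rightarrow> golf_omega" where
    "extend f = merge K (- K) (f, restrict (\<lambda>_. undefined) (- K))" for f
  have "(\<lambda>f. (f, restrict (\<lambda>_. undefined) (- K))) \<in> measurable (PiM K (\<lambda>_. site_law \<rho>b \<rho>h p))
      (PiM K (\<lambda>_. site_law \<rho>b \<rho>h p) \<Otimes>\<^sub>M PiM (- K) (\<lambda>_. site_law \<rho>b \<rho>h p))"
    by (intro measurable_Pair measurable_ident_sets measurable_const) (auto simp: space_PiM space_site_law)
  from measurable_comp[OF this measurable_merge]
  have "(\<lambda>f. merge K (- K) (f, restrict (\<lambda>_. undefined) (- K)))
      \<in> measurable (PiM K (\<lambda>_. site_law \<rho>b \<rho>h p)) (PiM (K \<union> - K) (\<lambda>_. site_law \<rho>b \<rho>h p))"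
    by (simp add: o_def)
  then have "extend \<in> measurable (PiM K (\<lambda>_. site_law \<rho>b \<rho>h p)) M"
    unfolding extend_def by simp
  then show "extend -` A \<inter> space (PiM K (\<lambda>_. site_law \<rho>b \<rho>h p)) \<in> sets (PiM K (\<lambda>_. site_law \<rho>b \<rho>h p))"
    using assms(1) by (rule measurable_sets)
  have "extend (restrict \<omega> K) \<in> A \<longleftrightarrow> \<omega> \<in> A" for \<omega>
  proof -
    have "\<forall>j\<in>K. eta (extend (restrict \<omega> K)) j = eta \<omega> j"
      by (simp add: eta_def extend_def merge_def)
    with assms(2) show ?thesis unfolding eta_determined_def by blast
  qed
  then show "(\<lambda>\<omega>. restrict \<omega> K) -` (extend -` A \<inter> space (PiM K (\<lambda>_. site_law \<rho>b \<rho>h p))) \<inter> space M = A"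
    by (auto simp: space_M space_PiM space_site_law)
qed

lemma prob_Int_eta_determined:
  assumes "I \<inter> J = {}" "A \<in> sets M" "B \<in> sets M" "eta_determined I A" "eta_determined J B"
  shows "P.prob (A \<inter> B) = P.prob A * P.prob B"
proof -
  obtain A' where A': "A' \<in> sets (PiM I (\<lambda>_. site_law \<rho>b \<rho>h p))"
    "(\<lambda>\<omega>. restrict \<omega> I) -` A' \<inter> space M = A"
    using eta_determined_restrict_preimage[OF assms(2,4)] by blast
  obtain B' where B': "B' \<in> sets (PiM J (\<lambda>_. site_law \<rho>b \<rho>h p))"
    "(\<lambda>\<omega>. restrict \<omega> J) -` B' \<inter> space M = B"
    using eta_determined_restrict_preimage[OF assms(3,5)] by blast
  have "P.indep_var (PiM I (\<lambda>_. site_law \<rho>b \<rho>h p)) (\<lambda>\<omega>. restrict \<omega> I)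
      (PiM J (\<lambda>_. site_law \<rho>b \<rho>h p)) (\<lambda>\<omega>. restrict \<omega> J)"
    using P.indep_var_restrict[OF indep_components assms(1)] by simp
  from P.indep_varD[OF this A'(1) B'(1)]
  have "P.prob ((\<lambda>\<omega>. (restrict \<omega> I, restrict \<omega> J)) -` (A' \<times> B') \<inter> space M) = P.prob A * P.prob B"
    unfolding A'(2) B'(2) .
  moreover have "(\<lambda>\<omega>. (restrict \<omega> I, restrict \<omega> J)) -` (A' \<times> B') \<inter> space M
      = ((\<lambda>\<omega>. restrict \<omega> I) -` A' \<inter> space M) \<inter> ((\<lambda>\<omega>. restrict \<omega> J) -` B' \<inter> space M)"
    by auto
  ultimately show ?thesis
    unfolding A'(2) B'(2) by simp
qed

lemma prob_by_state:
  assumes "x \<notin> K" "E \<in> sets M" "\<And>a. T a \<in> sets M" "\<And>a. eta_determined K (T a)"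
    and E_eq: "\<And>\<omega>. \<omega> \<in> E \<longleftrightarrow> \<omega> \<in> T (eta \<omega> x)"
  shows "P.prob E = (\<Sum>a\<in>{-1, 0, 1}. state_prob \<rho>b \<rho>h a * P.prob (T a))"
proof -
  let ?S = "\<lambda>a. {\<omega>. eta \<omega> x = a} \<inter> T a"
  have S_sets: "?S a \<in> sets M" for a
    using sets_eta_eq assms(3) by blast
  have "AE \<omega> in M. \<omega> \<in> E \<longleftrightarrow> \<omega> \<in> (\<Union>a\<in>{-1, 0, 1}. ?S a)"
    using AE_eta_values
  proof eventually_elim
    fix \<omega> assume "\<forall>y. eta \<omega> y \<in> {-1, 0, 1}"
    then have "eta \<omega> x \<in> {-1, 0, 1}" by blast
    then have "\<omega> \<in> (\<Union>a\<in>{-1, 0, 1}. ?S a) \<longleftrightarrow> \<omega> \<in> T (eta \<omega> x)" by auto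
    then show "\<omega> \<in> E \<longleftrightarrow> \<omega> \<in> (\<Union>a\<in>{-1, 0, 1}. ?S a)" by (simp only: E_eq)
  qed
  then have "P.prob E = P.prob (\<Union>a\<in>{-1, 0, 1}. ?S a)"
    by (rule measure_eq_AE) (use assms(2) S_sets in auto)
  also have "\<dots> = (\<Sum>a\<in>{-1, 0, 1}. P.prob (?S a))"
    by (rule P.finite_measure_finite_Union) (auto simp: disjoint_family_on_def S_sets)
  also have "\<dots> = (\<Sum>a\<in>{-1, 0, 1}. state_prob \<rho>b \<rho>h a * P.prob (T a))"
  proof (rule sum.cong)
    fix a
    have "eta_determined {x} {\<omega>. eta \<omega> x = a}" by (simp add: eta_determined_def)
    then show "P.prob (?S a) = state_prob \<rho>b \<rho>h a * P.prob (T a)"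
      using prob_Int_eta_determined[of "{x}" K] assms(1,3,4) sets_eta_eq prob_eta by simp
  qed simp
  finally show ?thesis .
qed

lemma sets_ray_reaches: "ray_reaches d e n j \<in> sets M"
  by (rule sets_eta_determined[OF _ eta_determined_ray_reaches]) simp

lemma sets_ray_ever_reaches: "ray_ever_reaches d e j \<in> sets M"
proof -
  have "ray_ever_reaches d e j = (\<Union>n. ray_reaches d e n j)"
    by (auto simp: ray_ever_reaches_def ray_reaches_def)
  then show ?thesis by (auto intro: sets.countable_UN sets_ray_reaches)
qed

(* the gambler's-ruin identity: (rho_b/rho_h)^j is harmonic for one step of the walk above 0 *)
lemma state_prob_drift:
  assumes "1 \<le> j"
  shows "(\<Sum>a\<in>{-1, 0, 1}. state_prob \<rho>b \<rho>h a * (\<rho>b / \<rho>h) ^ nat (j - a)) = (\<rho>b / \<rho>h) ^ nat j"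
proof -
  define k where "k = nat j - 1"
  have "nat (j + 1) = Suc (Suc k)" "nat j = Suc k" "nat (j - 1) = k"
    using assms unfolding k_def by auto
  then show ?thesis
    using hole_density_pos by (simp add: state_prob_def field_simps)
qed

lemma prob_ray_reaches_le:
  assumes "d \<noteq> 0"
  shows "P.prob (ray_reaches d e n j) \<le> (\<rho>b / \<rho>h) ^ nat j"
proof (induction n arbitrary: e j)
  case 0
  show ?case
  proof (cases "j \<le> 0")
    case False
    then have "ray_reaches d e 0 j = {}" by (auto simp: ray_reaches_def ray_sum_def)
    then show ?thesis by (simp add: drift_ratio_nonneg)
  qed simp
next
  case (Suc n)
  show ?case
  proof (cases "j \<le> 0")
    case False
    have "P.prob (ray_reaches d e (Suc n) j)
        = (\<Sum>a\<in>{-1, 0, 1}. state_prob \<rho>b \<rho>h a * P.prob (ray_reaches d (e + d) n (j - a)))"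
    proof (rule prob_by_state)
      show "e + d \<notin> (\<lambda>t. e + d + d * int t) ` {1..n}"
        using \<open>d \<noteq> 0\<close> by auto
      show "eta_determined ((\<lambda>t. e + d + d * int t) ` {1..n}) (ray_reaches d (e + d) n (j - a))" for a
        by (rule eta_determined_ray_reaches)
      show "\<omega> \<in> ray_reaches d e (Suc n) j \<longleftrightarrow> \<omega> \<in> ray_reaches d (e + d) n (j - eta \<omega> (e + d))" for \<omega>
        using False by (simp add: mem_ray_reaches_Suc)
    qed (rule sets_ray_reaches)+
    also have "\<dots> \<le> (\<Sum>a\<in>{-1, 0, 1}. state_prob \<rho>b \<rho>h a * (\<rho>b / \<rho>h) ^ nat (j - a))"
      by (intro sum_mono mult_left_mono Suc.IH state_prob_nonneg)
    also have "\<dots> = (\<rho>b / \<rho>h) ^ nat j"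
      using False by (intro state_prob_drift) simp
    finally show ?thesis .
  qed simp
qed

lemma prob_ray_ever_reaches_le:
  assumes "d \<noteq> 0"
  shows "P.prob (ray_ever_reaches d e j) \<le> (\<rho>b / \<rho>h) ^ nat j"
proof -
  have "(\<lambda>n. P.prob (ray_reaches d e n j)) \<longlonglongrightarrow> P.prob (\<Union>n. ray_reaches d e n j)"
    by (rule P.finite_Lim_measure_incseq)
       (use sets_ray_reaches in \<open>auto simp: incseq_def ray_reaches_def intro: order_trans\<close>)
  moreover have "(\<Union>n. ray_reaches d e n j) = ray_ever_reaches d e j"
    by (auto simp: ray_ever_reaches_def ray_reaches_def)
  ultimately show ?thesis
    using prob_ray_reaches_le[OF assms] by (intro LIMSEQ_le_const2) auto
qed

lemma eta_determined_hole_block: "eta_determined {u - int r..u + int r} (hole_block u r)"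
  unfolding eta_determined_def hole_block_def by auto

lemma sets_hole_block: "hole_block u r \<in> sets M"
  by (rule sets_eta_determined[OF _ eta_determined_hole_block]) simp

lemma prob_hole_block: "P.prob (hole_block u r) = \<rho>h ^ (2 * r + 1)"
proof -
  have "card {u - int r..u + int r} = 2 * r + 1" by simp
  then show ?thesis
    using prob_eta_block[of "{u - int r..u + int r}" "-1"]
    by (simp add: hole_block_def state_prob_def)
qed

lemma prob_hole_block_ray_le:
  assumes "d \<in> {-1, 1}" "e = u + d * int r"
  shows "P.prob (hole_block u r \<inter> ray_ever_reaches d e (int r + 1))
    \<le> \<rho>h ^ (2 * r + 1) * (\<rho>b / \<rho>h) ^ (r + 1)"
proof -
  have "{u - int r..u + int r} \<inter> (\<lambda>t. e + d * int t) ` {1..} = {}"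
    using assms by auto
  then have "P.prob (hole_block u r \<inter> ray_ever_reaches d e (int r + 1))
      = P.prob (hole_block u r) * P.prob (ray_ever_reaches d e (int r + 1))"
    by (rule prob_Int_eta_determined[OF _ sets_hole_block sets_ray_ever_reaches
          eta_determined_hole_block eta_determined_ray_ever_reaches])
  also have "\<dots> \<le> \<rho>h ^ (2 * r + 1) * (\<rho>b / \<rho>h) ^ (r + 1)"
  proof -
    have exponent: "nat (int r + 1) = r + 1" by simp
    have "P.prob (ray_ever_reaches d e (int r + 1)) \<le> (\<rho>b / \<rho>h) ^ nat (int r + 1)"
      by (rule prob_ray_ever_reaches_le) (use assms(1) in auto)
    then show ?thesis
      unfolding exponent prob_hole_block using hole_density_pos by (intro mult_left_mono) simp_all
  qed
  finally show ?thesis .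
qed

lemma prob_no_hole_block:
  assumes "\<And>i j. i < j \<Longrightarrow> j < m \<Longrightarrow> {u i - int r..u i + int r} \<inter> {u j - int r..u j + int r} = {}"
  shows "P.prob (\<Inter>i<m. - hole_block (u i) r) = (1 - \<rho>h ^ (2 * r + 1)) ^ m"
  using assms
proof (induction m)
  case 0
  then show ?case using P.P.prob_space by (simp add: space_M)
next
  case (Suc m)
  have "(\<Inter>i<Suc m. - hole_block (u i) r) = (\<Inter>i<m. - hole_block (u i) r) \<inter> - hole_block (u m) r"
    by (auto simp: lessThan_Suc)
  moreover have "P.prob ((\<Inter>i<m. - hole_block (u i) r) \<inter> - hole_block (u m) r)
      = P.prob (\<Inter>i<m. - hole_block (u i) r) * P.prob (- hole_block (u m) r)"
  proof (rule prob_Int_eta_determined)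
    show "(\<Union>i<m. {u i - int r..u i + int r}) \<inter> {u m - int r..u m + int r} = {}"
      using Suc.prems by blast
    show "eta_determined (\<Union>i<m. {u i - int r..u i + int r}) (\<Inter>i<m. - hole_block (u i) r)"
      by (intro eta_determined_INT eta_determined_Compl eta_determined_hole_block)
    show "eta_determined {u m - int r..u m + int r} (- hole_block (u m) r)"
      by (intro eta_determined_Compl eta_determined_hole_block)
    show "(\<Inter>i<m. - hole_block (u i) r) \<in> sets M" "- hole_block (u m) r \<in> sets M"
      using sets_hole_block by (auto simp: Compl_eq_Diff_UNIV space_M[symmetric])
  qed
  moreover have "P.prob (- hole_block (u m) r) = 1 - \<rho>h ^ (2 * r + 1)"
    using P.prob_compl[OF sets_hole_block] by (simp add: Compl_eq_Diff_UNIV space_M prob_hole_block)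
  ultimately show ?case
    using Suc by simp
qed

lemma prob_no_good_block_le:
  assumes "\<And>i j. i < j \<Longrightarrow> j < m \<Longrightarrow> {u i - int r..u i + int r} \<inter> {u j - int r..u j + int r} = {}"
  shows "P.prob (\<Inter>i<m. - good_block (u i) r)
    \<le> (1 - \<rho>h ^ (2 * r + 1)) ^ m + real m * \<rho>h ^ (2 * r + 1) * (2 * (\<rho>b / \<rho>h) ^ (r + 1))"
proof -
  let ?g = "\<rho>h ^ (2 * r + 1) * (\<rho>b / \<rho>h) ^ (r + 1)"
  define L where "L i = hole_block (u i) r \<inter> ray_ever_reaches (-1) (u i - int r) (int r + 1)" for i
  define R where "R i = hole_block (u i) r \<inter> ray_ever_reaches 1 (u i + int r) (int r + 1)" for i
  have sets: "L i \<in> sets M" "R i \<in> sets M" "(\<Inter>i<m. - hole_block (u i) r) \<in> sets M" for i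
    using sets_hole_block sets_ray_ever_reaches
    by (auto simp: L_def R_def Compl_eq_Diff_UNIV space_M[symmetric])
  have "(\<Inter>i<m. - good_block (u i) r) \<subseteq> (\<Inter>i<m. - hole_block (u i) r) \<union> (\<Union>i<m. L i) \<union> (\<Union>i<m. R i)"
    by (auto simp: good_block_def L_def R_def)
  then have "P.prob (\<Inter>i<m. - good_block (u i) r)
      \<le> P.prob ((\<Inter>i<m. - hole_block (u i) r) \<union> (\<Union>i<m. L i) \<union> (\<Union>i<m. R i))"
    using sets by (intro P.finite_measure_mono) auto
  also have "\<dots> \<le> P.prob (\<Inter>i<m. - hole_block (u i) r) + P.prob (\<Union>i<m. L i) + P.prob (\<Union>i<m. R i)"
    using sets by (intro order_trans[OF measure_Un_le] add_mono measure_Un_le)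
      auto
  also have "\<dots> \<le> P.prob (\<Inter>i<m. - hole_block (u i) r) + (\<Sum>i<m. P.prob (L i)) + (\<Sum>i<m. P.prob (R i))"
    using sets by (intro add_mono order_refl P.finite_measure_subadditive_finite) auto
  also have "\<dots> \<le> (1 - \<rho>h ^ (2 * r + 1)) ^ m + (\<Sum>i<m. ?g) + (\<Sum>i<m. ?g)"
  proof (intro add_mono sum_mono)
    show "P.prob (\<Inter>i<m. - hole_block (u i) r) \<le> (1 - \<rho>h ^ (2 * r + 1)) ^ m"
      by (rule eq_refl[OF prob_no_hole_block[OF assms]])
    show "P.prob (L i) \<le> ?g" "P.prob (R i) \<le> ?g" for i
      unfolding L_def R_def by (rule prob_hole_block_ray_le; simp)+
  qed
  also have "\<dots> = (1 - \<rho>h ^ (2 * r + 1)) ^ m + real m * \<rho>h ^ (2 * r + 1) * (2 * (\<rho>b / \<rho>h) ^ (r + 1))"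
    by (simp add: sum_constant algebra_simps)
  finally show ?thesis .
qed

lemma sets_good_block: "good_block u r \<in> sets M"
  unfolding good_block_def using sets_hole_block sets_ray_ever_reaches by blast

lemma null_sets_no_good_block:
  assumes "s \<in> {-1, 1}"
  shows "(\<Inter>r. \<Inter>m. \<Inter>i<m. - good_block (block_center s N r i) r) \<in> null_sets M"
proof -
  let ?Z = "\<Inter>r. \<Inter>m. \<Inter>i<m. - good_block (block_center s N r i) r"
  have sets_trials: "(\<Inter>i<m. - good_block (block_center s N r i) r) \<in> sets M" for r m
    using sets_good_block by (auto simp: Compl_eq_Diff_UNIV space_M[symmetric])
  have "P.prob ?Z \<le> 0"
  proof (rule nonpos_if_trial_bounds)
    show "0 < \<rho>h ^ (2 * r + 1)" for r
      using hole_density_pos by simp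
    show "\<rho>h ^ (2 * r + 1) \<le> 1" for r
      using hole_density_pos ball_nonneg density_sum by (intro power_le_one) auto
    have "(\<lambda>r. (\<rho>b / \<rho>h) ^ Suc r) \<longlonglongrightarrow> 0"
      using drift_ratio_nonneg ball_less_hole hole_density_pos
      by (intro LIMSEQ_Suc LIMSEQ_realpow_zero) auto
    then have "(\<lambda>r. 2 * (\<rho>b / \<rho>h) ^ Suc r) \<longlonglongrightarrow> 0"
      by (rule tendsto_mult_right_zero)
    then show "(\<lambda>r. 2 * (\<rho>b / \<rho>h) ^ (r + 1)) \<longlonglongrightarrow> 0"
      by (simp only: Suc_eq_plus1)
    show "0 \<le> 2 * (\<rho>b / \<rho>h) ^ (r + 1)" for r
      using drift_ratio_nonneg by (intro mult_nonneg_nonneg zero_le_power) auto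
    show "P.prob ?Z \<le> (1 - \<rho>h ^ (2 * r + 1)) ^ m
        + real m * \<rho>h ^ (2 * r + 1) * (2 * (\<rho>b / \<rho>h) ^ (r + 1))" for r m
    proof -
      have "P.prob ?Z \<le> P.prob (\<Inter>i<m. - good_block (block_center s N r i) r)"
        using sets_trials by (intro P.finite_measure_mono) auto
      also have "\<dots> \<le> (1 - \<rho>h ^ (2 * r + 1)) ^ m
          + real m * \<rho>h ^ (2 * r + 1) * (2 * (\<rho>b / \<rho>h) ^ (r + 1))"
        by (rule prob_no_good_block_le) (rule block_center_disjoint[OF assms])
      finally show ?thesis .
    qed
  qed
  moreover have "?Z \<in> sets M"
    using sets_trials by auto
  ultimately show ?thesis
    by (simp add: null_sets_def P.emeasure_eq_measure measure_nonneg antisym)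
qed

lemma AE_separator_beyond:
  assumes "s \<in> {-1, 1}"
  shows "AE \<omega> in M. \<forall>N. \<exists>v. N < s * v \<and> separator \<omega> v"
proof -
  have "AE \<omega> in M. \<exists>v. N < s * v \<and> separator \<omega> v" for N
  proof (rule AE_I'[OF null_sets_no_good_block[OF assms, of N]])
    show "{\<omega> \<in> space M. \<not> (\<exists>v. N < s * v \<and> separator \<omega> v)}
        \<subseteq> (\<Inter>r. \<Inter>m. \<Inter>i<m. - good_block (block_center s N r i) r)"
      using separator_of_good_block block_center_beyond[OF assms] by blast
  qed
  then show ?thesis unfolding AE_all_countable ..
qed

theorem AE_separators_in_H1:
  "AE \<omega> in M. (\<forall>v. separator \<omega> v \<longrightarrow> v \<in> H1 \<omega>)
     \<and> infinite {x \<in> H1 \<omega>. x < 0} \<and> infinite {x \<in> H1 \<omega>. x > 0}"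
  using AE_eta_values AE_separator_beyond[of 1, simplified] AE_separator_beyond[of "-1", simplified]
proof eventually_elim
  case (elim \<omega>)
  have in_H1: "v \<in> H1 \<omega>" if "separator \<omega> v" for v
    using separator_in_H1 elim(1) that by blast
  have "infinite {x \<in> H1 \<omega>. x > 0}"
    unfolding infinite_int_iff_unbounded
  proof
    fix m
    obtain v where "max m 0 < v" "separator \<omega> v" using elim(2) by blast
    then show "\<exists>n. m < \<bar>n\<bar> \<and> n \<in> {x \<in> H1 \<omega>. x > 0}"
      using in_H1 by (intro exI[of _ v]) auto
  qed
  moreover have "infinite {x \<in> H1 \<omega>. x < 0}"
    unfolding infinite_int_iff_unbounded
  proof
    fix m
    obtain v where "max m 0 < - v" "separator \<omega> v" using elim(3) by blast
    then show "\<exists>n. m < \<bar>n\<bar> \<and> n \<in> {x \<in> H1 \<omega>. x < 0}"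
      using in_H1 by (intro exI[of _ v]) auto
  qed
  ultimately show ?case using in_H1 by blast
qed

end

(* walk_law p is a probability measure for every p, as bernoulli_pmf clips p to [0, 1] *)
theorem mainTheorem19:
  fixes \<rho>b \<rho>h p :: real
  assumes "0 \<le> \<rho>b" and "\<rho>b < \<rho>h" and "\<rho>b + \<rho>h \<le> 1"
    and "0 \<le> p" and "p \<le> 1"
  shows "AE \<omega> in golf_space \<rho>b \<rho>h p.
           (\<forall>v. separator \<omega> v \<longrightarrow> v \<in> H1 \<omega>)
         \<and> infinite {x \<in> H1 \<omega>. x < 0} \<and> infinite {x \<in> H1 \<omega>. x > 0}"
proof -
  interpret golf \<rho>b \<rho>h p
    using assms by unfold_locales auto
  show ?thesis
    unfolding golf_space_def by (rule AE_separators_in_H1)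
qed

end
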